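(* Let $n\ge2$, let $Q$ be a symmetric $n\times n$ matrix with entries in $[0,1]$ and zero diagonal, and let $A=\mathrm{Bern}(Q)$. Then $\mathbb E[\|A-Q\|_\square]\le16\sqrt{\rho(Q)/n}$, and if $n\rho(Q)\ge1$, then with probability at least $1-e^{-n}$, $\|A-Q\|_\square\le15\sqrt{\rho(Q)/n}$.
   Context: $\mathrm{Bern}(Q)$ is the random symmetric $\{0,1\}$-matrix with $A_{ij}=A_{ji}=1$ with probability $Q_{ij}$ independently for $i<j$ and $A_{ii}=0$. For an $n\times n$ matrix $H$: $\rho(H)=\frac1{n^2}\sum_{i,j}H_{ij}$ and $\|H\|_\square=\max_{S,T\subseteq[n]}\frac1{n^2}|\sum_{(i,j)\in S\times T}H_{ij}|$. *)

theory Defs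
  imports "HOL-Probability.Probability"
begin

text \<open>n x n matrices are functions nat => nat => real, indexed by {0..<n}.\<close>

definition density :: "nat \<Rightarrow> (nat \<Rightarrow> nat \<Rightarrow> real) \<Rightarrow> real" where
  "density n H = (\<Sum>i<n. \<Sum>j<n. H i j) / (real n)^2"

definition cut_norm :: "nat \<Rightarrow> (nat \<Rightarrow> nat \<Rightarrow> real) \<Rightarrow> real" where
  "cut_norm n H = Max {\<bar>\<Sum>i\<in>S. \<Sum>j\<in>T. H i j\<bar> / (real n)^2 | S T. S \<subseteq> {..<n} \<and> T \<subseteq> {..<n}}"

text \<open>Bern(Q): independent Bernoulli(Q i j) entries for i < j < n, symmetrised, zero diagonal.
  Entries outside the index range {0..<n} are 0.\<close>

definition bern :: "nat \<Rightarrow> (nat \<Rightarrow> nat \<Rightarrow> real) \<Rightarrow> (nat \<Rightarrow> nat \<Rightarrow> real) pmf" where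
  "bern n Q = map_pmf
     (\<lambda>X i j. if i < j then (if X (i, j) then 1 else 0)
              else if j < i then (if X (j, i) then 1 else 0) else 0)
     (Pi_pmf {(i, j). i < j \<and> j < n} False (\<lambda>(i, j). bernoulli_pmf (Q i j)))"

end

theory Submission
  imports Defs
begin

text \<open>
  The cut-norm sum over \<open>S \<times> T\<close> of \<open>A - Q\<close> is a weighted sum of independent centred
  Bernoulli variables with weights in \<open>[-2, 2]\<close>. With \<open>d = n \<rho>(Q) \<ge> 1\<close>, a Chernoff bound
  with parameter \<open>1 / (2 \<surd>d)\<close> makes each of the \<open>2 \<cdot> 4\<^sup>n\<close> signed events \<open>\<plusminus>\<Sigma> \<ge> 15 n \<surd>d\<close>
  have probability at most \<open>exp (-7n)\<close>, and a union bound gives the tail estimate. For the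
  expectation, if \<open>\<surd>d \<ge> 8\<close> the tail estimate together with the trivial bound 1 on the cut
  norm of \<open>A - Q\<close> suffices;
  otherwise the cut norm is bounded by the entrywise \<open>L\<^sub>1\<close> norm, whose expectation is at most
  \<open>2 \<rho>(Q) = 2 d / n \<le> 16 \<surd>d / n\<close>.
\<close>

lemma exp_le_one_plus_square:
  fixes u :: real
  assumes "\<bar>u\<bar> \<le> 1"
  shows "exp u \<le> 1 + u + u\<^sup>2"
proof (cases "u \<ge> 0")
  case True
  then show ?thesis using assms exp_bound by auto
next
  case False
  define y where "y = - u"
  have y: "y \<ge> 0" using False y_def by auto
  have "1 \<le> (1 + y + y\<^sup>2/2) * (1 - y + y\<^sup>2)"
  proof -
    have "(1 + y + y\<^sup>2/2) * (1 - y + y\<^sup>2) = 1 + y\<^sup>2/2 + y^3/2 + y^4/2"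
      by (simp add: field_simps power2_eq_square power3_eq_cube power4_eq_xxxx)
    then show ?thesis using y by simp
  qed
  also have "\<dots> \<le> exp y * (1 - y + y\<^sup>2)"
  proof (rule mult_right_mono)
    show "1 + y + y\<^sup>2/2 \<le> exp y" using exp_lower_Taylor_quadratic y by auto
    have "0 \<le> (y - 1/2)\<^sup>2" by simp
    then show "0 \<le> 1 - y + y\<^sup>2" by (simp add: power2_eq_square algebra_simps)
  qed
  finally have "exp (-y) \<le> 1 - y + y\<^sup>2"
    by (simp add: exp_minus field_simps)
  then show ?thesis by (simp add: y_def)
qed

lemma bernoulli_centered_mgf_le:
  fixes q u :: real
  assumes q: "0 \<le> q" "q \<le> 1" and u: "\<bar>u\<bar> \<le> 1"
  shows "measure_pmf.expectation (bernoulli_pmf q) (\<lambda>x. exp (u * ((if x then 1 else 0) - q)))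
          \<le> exp (q * u\<^sup>2)"
proof -
  have "measure_pmf.expectation (bernoulli_pmf q) (\<lambda>x. exp (u * ((if x then 1 else 0) - q)))
       = exp (- u * q) * (1 + q * (exp u - 1))"
    using q by (simp add: algebra_simps flip: exp_add)
  also have "\<dots> \<le> exp (- u * q) * (1 + q * (u + u\<^sup>2))"
    using exp_le_one_plus_square[OF u] q by (intro mult_left_mono) (auto intro: mult_left_mono)
  also have "\<dots> \<le> exp (- u * q) * exp (q * (u + u\<^sup>2))"
    by (intro mult_left_mono) (auto simp: exp_ge_add_one_self)
  also have "\<dots> = exp (q * u\<^sup>2)" by (simp add: algebra_simps flip: exp_add)
  finally show ?thesis .
qed

lemma finite_set_pmf_Pi_bernoulli:
  assumes "finite E"
  shows "finite (set_pmf (Pi_pmf E False (\<lambda>e. bernoulli_pmf (q e))))"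
  by (rule finite_subset[OF set_Pi_pmf_subset'[OF assms]]) (auto intro!: finite_PiE_dflt assms)

lemma Chernoff_Pi_bernoulli:
  fixes E :: "'a set" and q c :: "'a \<Rightarrow> real" and C l t :: real
  assumes E: "finite E" and q: "\<And>e. e \<in> E \<Longrightarrow> 0 \<le> q e \<and> q e \<le> 1"
    and c: "\<And>e. e \<in> E \<Longrightarrow> \<bar>c e\<bar> \<le> C" and l: "0 \<le> l" "l * C \<le> 1"
  shows "measure_pmf.prob (Pi_pmf E False (\<lambda>e. bernoulli_pmf (q e)))
           {X. t \<le> (\<Sum>e\<in>E. c e * ((if X e then 1 else 0) - q e))}
         \<le> exp (- l * t + (l * C)\<^sup>2 * (\<Sum>e\<in>E. q e))"
proof -
  define P where "P = Pi_pmf E False (\<lambda>e. bernoulli_pmf (q e))"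
  define Y where "Y = (\<lambda>e x. l * c e * ((if x then 1 else 0) - q e))"
  define Z where "Z = (\<lambda>X. \<Sum>e\<in>E. c e * ((if X e then 1 else 0) - q e))"
  have fin: "finite (set_pmf P)" unfolding P_def by (rule finite_set_pmf_Pi_bernoulli[OF E])
  have Y_small: "\<bar>l * c e\<bar> \<le> 1" if "e \<in> E" for e
  proof -
    have "\<bar>l * c e\<bar> \<le> l * C" using c[OF that] l by (simp add: abs_mult mult_left_mono)
    then show ?thesis using l by linarith
  qed
  have "measure_pmf.prob P {X. t \<le> Z X} = measure_pmf.expectation P (indicator {X. t \<le> Z X})"
    by simp
  also have "\<dots> \<le> measure_pmf.expectation P (\<lambda>X. exp (l * (Z X - t)))"
    by (rule integral_mono) (use l in \<open>auto simp: indicator_def intro: integrable_measure_pmf_finite[OF fin]\<close>)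
  also have "\<dots> = exp (- l * t) * measure_pmf.expectation P (\<lambda>X. \<Prod>e\<in>E. exp (Y e (X e)))"
  proof -
    have "exp (l * (Z X - t)) = exp (- l * t) * (\<Prod>e\<in>E. exp (Y e (X e)))" for X
    proof -
      have "l * (Z X - t) = - l * t + (\<Sum>e\<in>E. Y e (X e))"
        by (simp add: Z_def Y_def sum_distrib_left algebra_simps)
      then show ?thesis by (simp only: exp_add exp_sum[OF E])
    qed
    then show ?thesis by simp
  qed
  also have "measure_pmf.expectation P (\<lambda>X. \<Prod>e\<in>E. exp (Y e (X e)))
      = (\<Prod>e\<in>E. measure_pmf.expectation (bernoulli_pmf (q e)) (\<lambda>x. exp (Y e x)))"
    unfolding P_def
    by (rule expectation_prod_Pi_pmf[OF E]) (auto intro: integrable_measure_pmf_finite)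
  also have "\<dots> \<le> (\<Prod>e\<in>E. exp ((l * C)\<^sup>2 * q e))"
  proof (rule prod_mono)
    fix e assume e: "e \<in> E"
    have "(l * c e)\<^sup>2 \<le> (l * C)\<^sup>2"
    proof -
      have "\<bar>l * c e\<bar> \<le> \<bar>l * C\<bar>"
        using c[OF e] l by (simp add: abs_mult mult_left_mono)
      then show ?thesis by (simp add: abs_le_square_iff)
    qed
    then have "q e * (l * c e)\<^sup>2 \<le> (l * C)\<^sup>2 * q e"
      using q[OF e] by (simp add: mult.commute mult_left_mono)
    moreover have "measure_pmf.expectation (bernoulli_pmf (q e)) (\<lambda>x. exp (Y e x)) \<le> exp (q e * (l * c e)\<^sup>2)"
      using bernoulli_centered_mgf_le[of "q e" "l * c e"] q[OF e] Y_small[OF e]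
      by (simp add: Y_def mult.assoc)
    ultimately have "measure_pmf.expectation (bernoulli_pmf (q e)) (\<lambda>x. exp (Y e x)) \<le> exp ((l * C)\<^sup>2 * q e)"
      by (meson exp_le_cancel_iff order_trans)
    moreover have "0 \<le> measure_pmf.expectation (bernoulli_pmf (q e)) (\<lambda>x. exp (Y e x))"
      by (rule integral_nonneg_AE) auto
    ultimately show "0 \<le> measure_pmf.expectation (bernoulli_pmf (q e)) (\<lambda>x. exp (Y e x)) \<and>
        measure_pmf.expectation (bernoulli_pmf (q e)) (\<lambda>x. exp (Y e x)) \<le> exp ((l * C)\<^sup>2 * q e)"
      by blast
  qed
  also have "\<dots> = exp ((l * C)\<^sup>2 * (\<Sum>e\<in>E. q e))" by (simp add: exp_sum[OF E] sum_distrib_left)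
  finally have "measure_pmf.prob P {X. t \<le> Z X} \<le> exp (- l * t) * exp ((l * C)\<^sup>2 * (\<Sum>e\<in>E. q e))"
    by (simp add: mult_left_mono)
  then show ?thesis by (simp add: P_def Z_def flip: exp_add)
qed

lemma real_two_pow_sq_times_two_le_exp:
  assumes "n \<ge> 1"
  shows "real (2^n * 2^n * 2) \<le> exp (6 * real n)"
proof -
  have "(2::real) \<le> 2^n" using assms by (metis one_le_numeral power_increasing power_one_right)
  then have "real (2^n * 2^n * 2) \<le> 2^n * 2^n * 2^n" by simp
  also have "\<dots> = (8::real)^n" by (simp flip: power_mult_distrib)
  also have "\<dots> \<le> exp 6 ^ n"
  proof (rule power_mono)
    have "1 + 6 + (6::real)\<^sup>2/2 \<le> exp 6" by (rule exp_lower_Taylor_quadratic) simp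
    then show "(8::real) \<le> exp 6" by simp
  qed simp
  also have "\<dots> = exp (6 * real n)" by (simp add: exp_of_nat_mult[symmetric] mult.commute)
  finally show ?thesis .
qed

definition upper_pairs :: "nat \<Rightarrow> (nat \<times> nat) set" where
  "upper_pairs n = {(i, j). i < j \<and> j < n}"

definition sym_adjacency :: "(nat \<times> nat \<Rightarrow> bool) \<Rightarrow> nat \<Rightarrow> nat \<Rightarrow> real" where
  "sym_adjacency X = (\<lambda>i j. if i < j then (if X (i, j) then 1 else 0)
                       else if j < i then (if X (j, i) then 1 else 0) else 0)"

lemma finite_upper_pairs [simp]: "finite (upper_pairs n)"
  by (rule finite_subset[of _ "{..<n} \<times> {..<n}"]) (auto simp: upper_pairs_def)

lemma sym_adjacency_commute: "sym_adjacency X i j = sym_adjacency X j i"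
  by (simp add: sym_adjacency_def)

lemma bern_eq_map_Pi_pmf:
  "bern n Q = map_pmf sym_adjacency (Pi_pmf (upper_pairs n) False (\<lambda>e. bernoulli_pmf (case_prod Q e)))"
  unfolding bern_def sym_adjacency_def upper_pairs_def by (simp add: case_prod_unfold)

lemma sum_square_eq_upper_pairs_diag:
  fixes g :: "nat \<Rightarrow> nat \<Rightarrow> real"
  shows "(\<Sum>i<n. \<Sum>j<n. g i j)
           = (\<Sum>(i, j)\<in>upper_pairs n. g i j + g j i) + (\<Sum>i<n. g i i)"
proof -
  define h where "h = (\<lambda>(i, j). g i j)"
  have square: "{..<n} \<times> {..<n} = (upper_pairs n \<union> prod.swap ` upper_pairs n) \<union> (\<lambda>i. (i, i)) ` {..<n}"
    by (auto simp: upper_pairs_def image_iff)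
  have "(\<Sum>i<n. \<Sum>j<n. g i j) = sum h ({..<n} \<times> {..<n})"
    by (simp add: h_def sum.cartesian_product)
  also have "\<dots> = sum h (upper_pairs n) + sum h (prod.swap ` upper_pairs n) + sum h ((\<lambda>i. (i, i)) ` {..<n})"
    unfolding square
    by (subst sum.union_disjoint; (subst sum.union_disjoint)?)
       (use finite_upper_pairs[of n] in \<open>auto simp: upper_pairs_def\<close>)
  also have "sum h (prod.swap ` upper_pairs n) = sum (h \<circ> prod.swap) (upper_pairs n)"
    by (rule sum.reindex) (auto intro: inj_on_subset[OF swap_inj_on])
  also have "sum h ((\<lambda>i. (i, i)) ` {..<n}) = (\<Sum>i<n. g i i)"
    by (subst sum.reindex) (auto simp: inj_on_def h_def)
  finally show ?thesis by (simp add: h_def sum.distrib case_prod_unfold)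
qed

lemma cut_norm_le_iff:
  "cut_norm n H \<le> r \<longleftrightarrow>
     (\<forall>S T. S \<subseteq> {..<n} \<longrightarrow> T \<subseteq> {..<n} \<longrightarrow> \<bar>\<Sum>i\<in>S. \<Sum>j\<in>T. H i j\<bar> / (real n)\<^sup>2 \<le> r)"
proof -
  have "{\<bar>\<Sum>i\<in>S. \<Sum>j\<in>T. H i j\<bar> / (real n)\<^sup>2 | S T. S \<subseteq> {..<n} \<and> T \<subseteq> {..<n}}
      = (\<lambda>(S, T). \<bar>\<Sum>i\<in>S. \<Sum>j\<in>T. H i j\<bar> / (real n)\<^sup>2) ` (Pow {..<n} \<times> Pow {..<n})"
    by auto
  then show ?thesis unfolding cut_norm_def by (subst Max_le_iff) auto
qed

lemma cut_norm_le_entrywise_L1: "cut_norm n H \<le> (\<Sum>i<n. \<Sum>j<n. \<bar>H i j\<bar>) / (real n)\<^sup>2"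
  unfolding cut_norm_le_iff
proof (intro allI impI)
  fix S T assume S: "S \<subseteq> {..<n}" and T: "T \<subseteq> {..<n}"
  have "\<bar>\<Sum>i\<in>S. \<Sum>j\<in>T. H i j\<bar> \<le> (\<Sum>i\<in>S. \<Sum>j\<in>T. \<bar>H i j\<bar>)"
    by (rule order_trans[OF sum_abs]) (intro sum_mono sum_abs)
  also have "\<dots> \<le> (\<Sum>i\<in>S. \<Sum>j<n. \<bar>H i j\<bar>)"
    by (intro sum_mono sum_mono2) (use T in auto)
  also have "\<dots> \<le> (\<Sum>i<n. \<Sum>j<n. \<bar>H i j\<bar>)"
    by (intro sum_mono2) (use S in \<open>auto intro: sum_nonneg\<close>)
  finally show "\<bar>\<Sum>i\<in>S. \<Sum>j\<in>T. H i j\<bar> / (real n)\<^sup>2 \<le> (\<Sum>i<n. \<Sum>j<n. \<bar>H i j\<bar>) / (real n)\<^sup>2"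
    by (simp add: divide_right_mono)
qed

lemma cut_norm_le_one:
  assumes "\<And>i j. i < n \<Longrightarrow> j < n \<Longrightarrow> \<bar>H i j\<bar> \<le> 1"
  shows "cut_norm n H \<le> 1"
proof -
  have "cut_norm n H \<le> (\<Sum>i<n. \<Sum>j<n. \<bar>H i j\<bar>) / (real n)\<^sup>2" by (rule cut_norm_le_entrywise_L1)
  also have "\<dots> \<le> (\<Sum>i<n. \<Sum>j<n. (1::real)) / (real n)\<^sup>2"
    by (intro divide_right_mono sum_mono assms) auto
  also have "\<dots> \<le> 1" by (simp add: power2_eq_square)
  finally show ?thesis .
qed

lemma sum_rectangle_eq_masked_sum:
  fixes f :: "nat \<Rightarrow> nat \<Rightarrow> real"
  assumes "S \<subseteq> {..<n}" "T \<subseteq> {..<n}"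
  shows "(\<Sum>i\<in>S. \<Sum>j\<in>T. f i j) = (\<Sum>i<n. \<Sum>j<n. if i \<in> S \<and> j \<in> T then f i j else 0)"
proof -
  have "(\<Sum>i\<in>S. \<Sum>j\<in>T. f i j) = (\<Sum>i<n. if i \<in> S then (\<Sum>j<n. if j \<in> T then f i j else 0) else 0)"
    using assms by (simp add: sum.If_cases Int_absorb1 Int_absorb2)
  also have "\<dots> = (\<Sum>i<n. \<Sum>j<n. if i \<in> S \<and> j \<in> T then f i j else 0)"
    by (intro sum.cong) auto
  finally show ?thesis .
qed

definition cut_weight :: "nat set \<Rightarrow> nat set \<Rightarrow> nat \<times> nat \<Rightarrow> real" where
  "cut_weight S T = (\<lambda>(i, j). (if i \<in> S \<and> j \<in> T then 1 else 0) + (if j \<in> S \<and> i \<in> T then 1 else 0))"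

lemma abs_cut_weight_le: "\<bar>cut_weight S T e\<bar> \<le> 2"
  by (auto simp: cut_weight_def split: prod.split)

locale edge_probabilities =
  fixes n :: nat and Q :: "nat \<Rightarrow> nat \<Rightarrow> real"
  assumes n_ge_2: "n \<ge> 2"
    and symmetric: "\<And>i j. i < n \<Longrightarrow> j < n \<Longrightarrow> Q i j = Q j i"
    and bounded: "\<And>i j. i < n \<Longrightarrow> j < n \<Longrightarrow> 0 \<le> Q i j \<and> Q i j \<le> 1"
    and diag_zero: "\<And>i. i < n \<Longrightarrow> Q i i = 0"
begin

definition edge_pmf :: "(nat \<times> nat \<Rightarrow> bool) pmf" where
  "edge_pmf = Pi_pmf (upper_pairs n) False (\<lambda>e. bernoulli_pmf (case_prod Q e))"

definition deviation :: "(nat \<times> nat \<Rightarrow> bool) \<Rightarrow> nat \<Rightarrow> nat \<Rightarrow> real" where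
  "deviation X = (\<lambda>i j. sym_adjacency X i j - Q i j)"

definition avg_degree :: real where
  "avg_degree = real n * density n Q"

lemma bern_eq: "bern n Q = map_pmf sym_adjacency edge_pmf"
  unfolding edge_pmf_def by (rule bern_eq_map_Pi_pmf)

lemma finite_set_edge_pmf: "finite (set_pmf edge_pmf)"
  unfolding edge_pmf_def by (rule finite_set_pmf_Pi_bernoulli) simp

lemma edge_prob_bounds: "e \<in> upper_pairs n \<Longrightarrow> 0 \<le> case_prod Q e \<and> case_prod Q e \<le> 1"
  using bounded by (auto simp: upper_pairs_def)

lemma sum_Q_eq_n_avg_degree: "(\<Sum>i<n. \<Sum>j<n. Q i j) = real n * avg_degree"
  using n_ge_2 by (simp add: avg_degree_def density_def power2_eq_square)

lemma sum_upper_pairs_Q: "(\<Sum>e\<in>upper_pairs n. case_prod Q e) = real n * avg_degree / 2"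
proof -
  have "real n * avg_degree = (\<Sum>(i, j)\<in>upper_pairs n. Q i j + Q j i) + (\<Sum>i<n. Q i i)"
    by (simp only: sum_Q_eq_n_avg_degree [symmetric] sum_square_eq_upper_pairs_diag)
  also have "\<dots> = (\<Sum>e\<in>upper_pairs n. 2 * case_prod Q e)"
    by (auto simp: diag_zero upper_pairs_def symmetric intro!: sum.cong)
  finally show ?thesis by (simp add: sum_distrib_left [symmetric])
qed

lemma avg_degree_nonneg: "avg_degree \<ge> 0"
proof -
  have "0 \<le> (\<Sum>i<n. \<Sum>j<n. Q i j)" using bounded by (intro sum_nonneg) auto
  then show ?thesis using n_ge_2 by (simp add: sum_Q_eq_n_avg_degree zero_le_mult_iff)
qed

lemma sqrt_density_div_n: "sqrt (density n Q / real n) = sqrt avg_degree / real n"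
proof -
  have "density n Q / real n = avg_degree / (real n)\<^sup>2"
    using n_ge_2 by (simp add: avg_degree_def power2_eq_square)
  then show ?thesis by (simp add: real_sqrt_divide)
qed

lemma abs_deviation_le_one: "i < n \<Longrightarrow> j < n \<Longrightarrow> \<bar>deviation X i j\<bar> \<le> 1"
  using bounded by (auto simp: deviation_def sym_adjacency_def)

lemma sum_rectangle_deviation:
  assumes "S \<subseteq> {..<n}" "T \<subseteq> {..<n}"
  shows "(\<Sum>i\<in>S. \<Sum>j\<in>T. deviation X i j)
           = (\<Sum>e\<in>upper_pairs n. cut_weight S T e * ((if X e then 1 else 0) - case_prod Q e))"
proof -
  define g where "g = (\<lambda>i j. if i \<in> S \<and> j \<in> T then deviation X i j else 0)"
  have "(\<Sum>i\<in>S. \<Sum>j\<in>T. deviation X i j) = (\<Sum>i<n. \<Sum>j<n. g i j)"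
    unfolding g_def by (rule sum_rectangle_eq_masked_sum[OF assms])
  also have "\<dots> = (\<Sum>(i, j)\<in>upper_pairs n. g i j + g j i) + (\<Sum>i<n. g i i)"
    by (rule sum_square_eq_upper_pairs_diag)
  also have "(\<Sum>i<n. g i i) = 0"
    by (intro sum.neutral) (auto simp: g_def deviation_def sym_adjacency_def diag_zero)
  also have "(\<Sum>(i, j)\<in>upper_pairs n. g i j + g j i)
      = (\<Sum>e\<in>upper_pairs n. cut_weight S T e * ((if X e then 1 else 0) - case_prod Q e))"
    by (intro sum.cong refl)
       (auto simp: upper_pairs_def g_def deviation_def sym_adjacency_def cut_weight_def symmetric algebra_simps)
  finally show ?thesis by simp
qed

lemma cut_norm_deviation_gt_obtains_signed_sum:
  assumes "r < cut_norm n (deviation X)"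
  obtains S T \<sigma> where "S \<subseteq> {..<n}" "T \<subseteq> {..<n}" "\<sigma> \<in> {1, -1}"
    and "(real n)\<^sup>2 * r \<le> (\<Sum>e\<in>upper_pairs n.
           (\<sigma> * cut_weight S T e) * ((if X e then 1 else 0) - case_prod Q e))"
proof -
  obtain S T where S: "S \<subseteq> {..<n}" and T: "T \<subseteq> {..<n}"
    and gt: "r < \<bar>\<Sum>i\<in>S. \<Sum>j\<in>T. deviation X i j\<bar> / (real n)\<^sup>2"
    using assms unfolding not_le [symmetric] cut_norm_le_iff by blast
  define Z where "Z = (\<Sum>e\<in>upper_pairs n. cut_weight S T e * ((if X e then 1 else 0) - case_prod Q e))"
  have "(real n)\<^sup>2 * r < \<bar>Z\<bar>"
    using gt n_ge_2 sum_rectangle_deviation[OF S T] by (simp add: Z_def field_simps)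
  then obtain \<sigma> :: real where "\<sigma> \<in> {1, -1}" "(real n)\<^sup>2 * r \<le> \<sigma> * Z"
    by (cases "Z \<ge> 0") (auto intro: that[of 1] that[of "-1"])
  then show ?thesis
    using that[OF S T] by (simp add: Z_def sum_distrib_left mult.assoc)
qed

lemma prob_cut_norm_deviation_gt:
  assumes "avg_degree \<ge> 1"
  shows "measure_pmf.prob edge_pmf {X. 15 * sqrt avg_degree / real n < cut_norm n (deviation X)}
           \<le> exp (- real n)"
proof -
  define s where "s = sqrt avg_degree"
  have s1: "s \<ge> 1" using assms by (simp add: s_def)
  define t where "t = 15 * real n * s"
  define I where "I = Pow {..<n} \<times> Pow {..<n} \<times> {1::real, -1}"
  define Ev where "Ev = (\<lambda>(S, T, \<sigma>). {X. t \<le> (\<Sum>e\<in>upper_pairs n.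
                    (\<sigma> * cut_weight S T e) * ((if X e then 1 else 0) - case_prod Q e))})"
  have cover: "{X. 15 * s / real n < cut_norm n (deviation X)} \<subseteq> (\<Union>i\<in>I. Ev i)"
  proof
    fix X assume "X \<in> {X. 15 * s / real n < cut_norm n (deviation X)}"
    then have "15 * s / real n < cut_norm n (deviation X)" by simp
    then obtain S T \<sigma> where "S \<subseteq> {..<n}" "T \<subseteq> {..<n}" "\<sigma> \<in> {1, -1}"
      and "(real n)\<^sup>2 * (15 * s / real n) \<le> (\<Sum>e\<in>upper_pairs n.
             (\<sigma> * cut_weight S T e) * ((if X e then 1 else 0) - case_prod Q e))"
      by (rule cut_norm_deviation_gt_obtains_signed_sum)
    moreover have "(real n)\<^sup>2 * (15 * s / real n) = t"
      using n_ge_2 by (simp add: t_def power2_eq_square)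
    ultimately have "X \<in> Ev (S, T, \<sigma>)" and "(S, T, \<sigma>) \<in> I"
      by (simp_all add: Ev_def I_def)
    then show "X \<in> (\<Union>i\<in>I. Ev i)" by blast
  qed
  have prob_Ev: "measure_pmf.prob edge_pmf (Ev i) \<le> exp (- 7 * real n)" if "i \<in> I" for i
  proof -
    obtain S T \<sigma> where i: "i = (S, T, \<sigma>)" by (cases i)
    have \<sigma>: "\<bar>\<sigma>\<bar> = 1" using that by (auto simp: i I_def)
    \<comment> \<open>Chernoff with \<open>\<lambda> = 1 / (2 s)\<close>: \<open>- \<lambda> t + (2 \<lambda>)\<^sup>2 \<cdot> n s\<^sup>2 / 2 = - 15 n / 2 + n / 2\<close>.\<close>
    have "measure_pmf.prob edge_pmf (Ev i)
        \<le> exp (- (1 / (2 * s)) * t + (1 / (2 * s) * 2)\<^sup>2 * (\<Sum>e\<in>upper_pairs n. case_prod Q e))"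
      unfolding i Ev_def edge_pmf_def prod.case
      by (rule Chernoff_Pi_bernoulli)
         (use edge_prob_bounds abs_cut_weight_le \<sigma> s1 in \<open>auto simp: abs_mult\<close>)
    also have "\<dots> = exp (- 7 * real n)"
      using s1 avg_degree_nonneg
      by (simp add: sum_upper_pairs_Q t_def s_def field_simps power2_eq_square)
    finally show ?thesis .
  qed
  have "measure_pmf.prob edge_pmf {X. 15 * s / real n < cut_norm n (deviation X)}
      \<le> measure_pmf.prob edge_pmf (\<Union>i\<in>I. Ev i)"
    by (rule measure_pmf.finite_measure_mono[OF cover]) simp
  also have "\<dots> \<le> (\<Sum>i\<in>I. measure_pmf.prob edge_pmf (Ev i))"
    by (rule measure_pmf.finite_measure_subadditive_finite) (auto simp: I_def)
  also have "\<dots> \<le> real (card I) * exp (- 7 * real n)"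
    using sum_mono[OF prob_Ev] by simp
  also have "\<dots> \<le> exp (6 * real n) * exp (- 7 * real n)"
  proof (intro mult_right_mono)
    have "card I = 2^n * 2^n * 2" by (simp add: I_def card_cartesian_product card_Pow)
    then show "real (card I) \<le> exp (6 * real n)"
      using real_two_pow_sq_times_two_le_exp n_ge_2 by simp
  qed simp
  also have "\<dots> = exp (- real n)" by (simp flip: exp_add)
  finally show ?thesis by (simp add: s_def)
qed

lemma expectation_abs_deviation_le:
  assumes "i < n" "j < n"
  shows "measure_pmf.expectation edge_pmf (\<lambda>X. \<bar>deviation X i j\<bar>) \<le> 2 * Q i j"
proof -
  have upper: "measure_pmf.expectation edge_pmf (\<lambda>X. \<bar>deviation X i j\<bar>) \<le> 2 * Q i j"
    if "i < j" "j < n" for i j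
  proof -
    have q: "0 \<le> Q i j" "Q i j \<le> 1" using bounded that by auto
    have "measure_pmf.expectation edge_pmf (\<lambda>X. \<bar>deviation X i j\<bar>)
        = measure_pmf.expectation (map_pmf (\<lambda>X. X (i, j)) edge_pmf)
            (\<lambda>x. \<bar>(if x then 1 else 0) - Q i j\<bar>)"
      using that by (simp add: deviation_def sym_adjacency_def)
    also have "map_pmf (\<lambda>X. X (i, j)) edge_pmf = bernoulli_pmf (Q i j)"
      unfolding edge_pmf_def
      by (subst Pi_pmf_component[OF finite_upper_pairs]) (use that in \<open>auto simp: upper_pairs_def\<close>)
    also have "measure_pmf.expectation (bernoulli_pmf (Q i j)) (\<lambda>x. \<bar>(if x then 1 else 0) - Q i j\<bar>)
        = 2 * Q i j * (1 - Q i j)"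
      using q by simp
    also have "\<dots> \<le> 2 * Q i j" using q by (simp add: mult_left_le)
    finally show ?thesis .
  qed
  consider "i < j" | "j < i" | "i = j" by linarith
  then show ?thesis
  proof cases
    case 2
    then show ?thesis
      using upper[of j i] assms symmetric[of i j]
      by (simp add: deviation_def sym_adjacency_commute[of _ i j])
  qed (use upper assms diag_zero in \<open>auto simp: deviation_def sym_adjacency_def\<close>)
qed

lemma expectation_cut_norm_deviation_le:
  "measure_pmf.expectation edge_pmf (\<lambda>X. cut_norm n (deviation X)) \<le> 16 * sqrt avg_degree / real n"
proof -
  define s where "s = sqrt avg_degree"
  have s0: "s \<ge> 0" using avg_degree_nonneg by (simp add: s_def)
  have n2: "real n \<ge> 2" using n_ge_2 by simp
  note integrable = integrable_measure_pmf_finite[OF finite_set_edge_pmf]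
  show ?thesis
  proof (cases "s \<ge> 8")
    case True
    define B where "B = {X. 15 * s / real n < cut_norm n (deviation X)}"
    have "measure_pmf.expectation edge_pmf (\<lambda>X. cut_norm n (deviation X))
        \<le> measure_pmf.expectation edge_pmf (\<lambda>X. 15 * s / real n + indicator B X)"
    proof (intro integral_mono integrable)
      fix X
      have "cut_norm n (deviation X) \<le> 1" by (intro cut_norm_le_one abs_deviation_le_one)
      then show "cut_norm n (deviation X) \<le> 15 * s / real n + indicator B X"
        using s0 n2 by (auto simp: B_def indicator_def not_less intro: order_trans)
    qed
    also have "\<dots> = 15 * s / real n + measure_pmf.prob edge_pmf B"
      by (subst Bochner_Integration.integral_add) (auto intro: integrable)
    also have "\<dots> \<le> 15 * s / real n + exp (- real n)"
    proof -
      have "1 \<le> avg_degree" using True real_sqrt_ge_1_iff[of avg_degree] unfolding s_def by linarith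
      then show ?thesis using prob_cut_norm_deviation_gt by (simp add: B_def s_def)
    qed
    also have "exp (- real n) \<le> s / real n"
    proof -
      have "exp (- real n) = 1 / exp (real n)" by (simp add: exp_minus inverse_eq_divide)
      also have "\<dots> \<le> 1 / real n"
      proof (rule divide_left_mono)
        show "real n \<le> exp (real n)" using exp_ge_add_one_self[of "real n"] by linarith
      qed (use n2 in auto)
      also have "\<dots> \<le> s / real n" using True n2 by (simp add: divide_right_mono)
      finally show ?thesis .
    qed
    finally show ?thesis by (simp add: s_def)
  next
    case False
    have "measure_pmf.expectation edge_pmf (\<lambda>X. cut_norm n (deviation X))
        \<le> measure_pmf.expectation edge_pmf (\<lambda>X. (\<Sum>i<n. \<Sum>j<n. \<bar>deviation X i j\<bar>) / (real n)\<^sup>2)"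
      by (intro integral_mono integrable cut_norm_le_entrywise_L1)
    also have "\<dots> = (\<Sum>i<n. \<Sum>j<n. measure_pmf.expectation edge_pmf (\<lambda>X. \<bar>deviation X i j\<bar>)) / (real n)\<^sup>2"
      by (simp add: Bochner_Integration.integral_sum integrable)
    also have "\<dots> \<le> (\<Sum>i<n. \<Sum>j<n. 2 * Q i j) / (real n)\<^sup>2"
      by (intro divide_right_mono sum_mono expectation_abs_deviation_le) auto
    also have "\<dots> = 2 * s\<^sup>2 / real n"
      using n2 avg_degree_nonneg
      by (simp add: sum_distrib_left[symmetric] sum_Q_eq_n_avg_degree s_def power2_eq_square)
    also have "\<dots> \<le> 16 * s / real n"
      using False s0 n2 by (simp add: power2_eq_square divide_right_mono mult_right_mono)
    finally show ?thesis by (simp add: s_def)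
  qed
qed

end

theorem lemmaB3:
  fixes n :: nat and Q :: "nat \<Rightarrow> nat \<Rightarrow> real"
  assumes "n \<ge> 2"
    and "\<And>i j. i < n \<Longrightarrow> j < n \<Longrightarrow> Q i j = Q j i"
    and "\<And>i j. i < n \<Longrightarrow> j < n \<Longrightarrow> 0 \<le> Q i j \<and> Q i j \<le> 1"
    and "\<And>i. i < n \<Longrightarrow> Q i i = 0"
  shows "measure_pmf.expectation (bern n Q) (\<lambda>A. cut_norm n (\<lambda>i j. A i j - Q i j))
           \<le> 16 * sqrt (density n Q / real n) \<and>
         (real n * density n Q \<ge> 1 \<longrightarrow>
         measure_pmf.prob (bern n Q)
           {A. cut_norm n (\<lambda>i j. A i j - Q i j) \<le> 15 * sqrt (density n Q / real n)}
         \<ge> 1 - exp (- real n))"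
proof -
  interpret edge_probabilities n Q by unfold_locales (use assms in auto)
  have bern_cut: "cut_norm n (\<lambda>i j. A i j - Q i j) = cut_norm n (deviation X)"
    if "A = sym_adjacency X" for A X
    using that by (simp add: deviation_def)
  show ?thesis
  proof (intro conjI impI)
    show "measure_pmf.expectation (bern n Q) (\<lambda>A. cut_norm n (\<lambda>i j. A i j - Q i j))
           \<le> 16 * sqrt (density n Q / real n)"
      using expectation_cut_norm_deviation_le
      by (simp add: bern_eq bern_cut sqrt_density_div_n)
  next
    assume "1 \<le> real n * density n Q"
    then have "measure_pmf.prob edge_pmf {X. 15 * sqrt avg_degree / real n < cut_norm n (deviation X)}
        \<le> exp (- real n)"
      by (intro prob_cut_norm_deviation_gt) (simp add: avg_degree_def)
    then show "measure_pmf.prob (bern n Q)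
           {A. cut_norm n (\<lambda>i j. A i j - Q i j) \<le> 15 * sqrt (density n Q / real n)}
         \<ge> 1 - exp (- real n)"
      using measure_pmf.prob_compl[of "{X. 15 * sqrt avg_degree / real n < cut_norm n (deviation X)}" edge_pmf]
      by (simp add: bern_eq bern_cut sqrt_density_div_n vimage_def Compl_eq_Diff_UNIV[symmetric]
                    Collect_neg_eq[symmetric] not_less)
  qed
qed

end
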